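(* Assume Assumption A1(2) and Assumption A2 (see context), and let $0<\eta_s\le\eta_{\infty,2}$ for all $s$. Then for every $t\ge1$, \[\mathbb E^{1/2}\big[\|\tilde\theta^{(\mathrm{tr})}_t\|^2\big]\le\prod_{s=1}^t(1-\eta_sa)^{H_s}\|\theta_0-\theta_\star\|,\qquad\text{where }\ \tilde\theta^{(\mathrm{tr})}_t=\prod_{s=1}^t\Gamma^{\mathrm{avg}}_s(\theta_0-\theta_\star).\]
   Context: Setting: $N$ agents, dimension $d$. For each agent $c$: distribution $\pi_c$ on $(\mathsf Z,\mathcal Z)$, measurable $\mathbf A^c:\mathsf Z\to\mathbb R^{d\times d}$, $\mathbf b^c:\mathsf Z\to\mathbb R^d$, $\bar{\mathbf A}^c=\mathbb E_{\pi_c}[\mathbf A^c(Z)]$, $\bar{\mathbf b}^c=\mathbb E_{\pi_c}[\mathbf b^c(Z)]$; $\theta_\star$ solves $(N^{-1}\sum_c\bar{\mathbf A}^c)\theta_\star=N^{-1}\sum_c\bar{\mathbf b}^c$; $\theta^c_\star$ solves $\bar{\mathbf A}^c\theta^c_\star=\bar{\mathbf b}^c$; $\varepsilon^c(z)=(\mathbf A^c(z)-\bar{\mathbf A}^c)\theta^c_\star-(\mathbf b^c(z)-\bar{\mathbf b}^c)$. Assumption A1(p): each $-\bar{\mathbf A}^c$ Hurwitz; there exist $a>0,\eta_{\infty,p}>0$, $\eta_{\infty,p}a\le1/2$, with $\mathbb E^{1/p}_{Z\sim\pi_c}[\|(I-\eta\mathbf A^c(Z))u\|^p]\le(1-\eta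 a)\|u\|$ for all $0<\eta<\eta_{\infty,p}$, $u\in\mathbb R^d$. Assumption A2: samples $Z^c_{s,h}$ ($s\ge1$, $1\le h\le H_s$, $c\in[N]$) independent with $Z^c_{s,h}\sim\pi_c$; $\max_c\sup_z\|\varepsilon^c(z)\|<\infty$; $\max_c\sup_z\max(\|\mathbf A^c(z)\|,\|\mathbf A^c(z)-\bar{\mathbf A}^c\|)<\infty$. Given step sizes $\eta_s$ and local step numbers $H_s\in\mathbb N$: $\Gamma^c_{s,l:r}=(I-\eta_s\mathbf A^c(Z^c_{s,r}))\cdots(I-\eta_s\mathbf A^c(Z^c_{s,l}))$ ($=I$ if $l>r$), $\Gamma^c_s=\Gamma^c_{s,1:H_s}$, $\Gamma^{\mathrm{avg}}_s=N^{-1}\sum_c\Gamma^c_s$; $\prod_{s=1}^t\Gamma^{\mathrm{avg}}_s=\Gamma^{\mathrm{avg}}_t\cdots\Gamma^{\mathrm{avg}}_1$; $\theta_0\in\mathbb R^d$ is fixed. *)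

theory Defs
  imports "HOL-Probability.Probability"
begin

definition hurwitz :: "real^'n^'n \<Rightarrow> bool" where
  "hurwitz M \<longleftrightarrow>
     (\<forall>ev::complex. (\<exists>v::complex^'n. v \<noteq> 0 \<and>
         (\<chi> i j. complex_of_real (M$i$j)) *v v = ev *s v) \<longrightarrow> Re ev < 0)"

fun lprod :: "(nat \<Rightarrow> real^'n^'n) \<Rightarrow> nat \<Rightarrow> real^'n^'n" where
  "lprod F 0 = mat 1"
| "lprod F (Suc n) = F (Suc n) ** lprod F n"

definition Gamma_loc ::
  "(nat \<Rightarrow> 'z \<Rightarrow> real^'n^'n) \<Rightarrow> (nat \<Rightarrow> real) \<Rightarrow> (nat \<Rightarrow> nat)
   \<Rightarrow> (nat \<Rightarrow> nat \<Rightarrow> nat \<Rightarrow> 'z) \<Rightarrow> nat \<Rightarrow> nat \<Rightarrow> real^'n^'n" where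
  "Gamma_loc A \<eta> H Z c s = lprod (\<lambda>h. mat 1 - \<eta> s *\<^sub>R A c (Z c s h)) (H s)"

definition Gamma_avg ::
  "nat \<Rightarrow> (nat \<Rightarrow> 'z \<Rightarrow> real^'n^'n) \<Rightarrow> (nat \<Rightarrow> real) \<Rightarrow> (nat \<Rightarrow> nat)
   \<Rightarrow> (nat \<Rightarrow> nat \<Rightarrow> nat \<Rightarrow> 'z) \<Rightarrow> nat \<Rightarrow> real^'n^'n" where
  "Gamma_avg N A \<eta> H Z s = (1 / real N) *\<^sub>R (\<Sum>c<N. Gamma_loc A \<eta> H Z c s)"

end

theory Submission
  imports Defs
begin

(* Every factor acts on a vector that depends only on earlier, hence independent, samples, so by
   Fubini and A1(2) it shrinks the second moment by (1 - eta_s a)^2; averaging over the agents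
   does not increase the second moment, the squared norm being convex.  A1(2) is only assumed for
   step sizes strictly below eta_inf, but the second moment of (I - x A^c(Z)) u is a quadratic
   polynomial in x (A^c is bounded), so the bound extends to eta_inf by continuity. *)

lemma borel_measurable_matrix_vector_mult [measurable (raw)]:
  fixes F :: "'a \<Rightarrow> real^'n^'m" and G :: "'a \<Rightarrow> real^'n"
  assumes "F \<in> borel_measurable Q" "G \<in> borel_measurable Q"
  shows "(\<lambda>x. F x *v G x) \<in> borel_measurable Q"
  using assms by (rule borel_measurable_continuous_Pair)
    (auto simp: matrix_vector_mult_def case_prod_unfold intro!: continuous_intros continuous_on_vec_lambda)

lemma norm_matrix_vector_mult_le:
  fixes A :: "real^'n^'m"
  shows "norm (A *v x) \<le> real CARD('m) * real CARD('n) * norm A * norm x"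
proof -
  have "onorm ((*v) A) \<le> real CARD('m) * real CARD('n) * norm A"
    by (intro onorm_le_matrix_component order_trans[OF component_le_norm_cart Finite_Cartesian_Product.norm_nth_le])
  then show ?thesis
    using onorm[OF matrix_vector_mul_bounded_linear, of A x] by (meson mult_right_mono norm_ge_zero order_trans)
qed

lemma norm_average_squared_le:
  fixes y :: "nat \<Rightarrow> 'a::real_normed_vector"
  shows "(norm ((1 / real N) *\<^sub>R (\<Sum>c<N. y c)))\<^sup>2 \<le> (\<Sum>c<N. (norm (y c))\<^sup>2) / real N"
proof -
  have "(norm ((1 / real N) *\<^sub>R (\<Sum>c<N. y c)))\<^sup>2 \<le> (\<Sum>c<N. norm (y c))\<^sup>2 / (real N)\<^sup>2"
    by (auto simp: power_divide intro!: divide_right_mono power_mono norm_sum)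
  also have "\<dots> \<le> (\<Sum>c<N. (norm (y c))\<^sup>2) * real N / (real N)\<^sup>2"
    using sum_squared_le_sum_of_squares[of "\<lambda>c. norm (y c)" "{..<N}"] by (intro divide_right_mono) auto
  also have "\<dots> = (\<Sum>c<N. (norm (y c))\<^sup>2) / real N"
    by (simp add: power2_eq_square)
  finally show ?thesis .
qed

lemma sum_matrix_vector_mult: "(\<Sum>c\<in>C. G c) *v x = (\<Sum>c\<in>C. G c *v x)"
  by (induction C rule: infinite_finite_induct) (auto simp: matrix_vector_mult_add_rdistrib)

lemma integral_norm_affine_matrix_quadratic:
  fixes F :: "'z \<Rightarrow> real^'n^'n"
  assumes P: "prob_space P" and F: "F \<in> borel_measurable P"
    and F_bound: "\<And>z. z \<in> space P \<Longrightarrow> norm (F z) \<le> B"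
  obtains \<alpha> \<beta> where "\<And>x. integrable P (\<lambda>z. (norm ((mat 1 - x *\<^sub>R F z) *v u))\<^sup>2)"
    and "\<And>x. (\<integral>z. (norm ((mat 1 - x *\<^sub>R F z) *v u))\<^sup>2 \<partial>P) = (norm u)\<^sup>2 - 2 * x * \<alpha> + x\<^sup>2 * \<beta>"
proof -
  interpret prob_space P by (rule P)
  note F[measurable]
  define C where "C = real CARD('n) * real CARD('n) * B * norm u"
  have Fu_bound: "norm (F z *v u) \<le> C" if "z \<in> space P" for z
  proof -
    have "norm (F z *v u) \<le> real CARD('n) * real CARD('n) * norm (F z) * norm u"
      by (rule norm_matrix_vector_mult_le)
    also have "\<dots> \<le> C"
      unfolding C_def using F_bound[OF that] by (intro mult_right_mono mult_left_mono) auto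
    finally show ?thesis .
  qed
  have int_inner: "integrable P (\<lambda>z. u \<bullet> (F z *v u))"
  proof (rule integrable_const_bound[where B = "norm u * C"])
    show "AE z in P. norm (u \<bullet> (F z *v u)) \<le> norm u * C"
      using Fu_bound by (intro AE_I2) (auto intro!: order_trans[OF Cauchy_Schwarz_ineq2] mult_left_mono)
  qed measurable
  have int_sq: "integrable P (\<lambda>z. (norm (F z *v u))\<^sup>2)"
  proof (rule integrable_const_bound[where B = "C\<^sup>2"])
    show "AE z in P. norm ((norm (F z *v u))\<^sup>2) \<le> C\<^sup>2"
      using Fu_bound by (intro AE_I2) (auto intro: power_mono)
  qed measurable
  have expand: "(norm ((mat 1 - x *\<^sub>R F z) *v u))\<^sup>2
      = (norm u)\<^sup>2 - 2 * x * (u \<bullet> (F z *v u)) + x\<^sup>2 * (norm (F z *v u))\<^sup>2" for x z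
  proof -
    have "(mat 1 - x *\<^sub>R F z) *v u = u - x *\<^sub>R (F z *v u)"
      by (simp add: matrix_vector_mult_diff_rdistrib scaleR_matrix_vector_assoc)
    then show ?thesis
      unfolding power2_norm_eq_inner by (simp add: inner_diff_left inner_diff_right inner_commute power2_eq_square)
  qed
  show ?thesis
    by (rule that[of "\<integral>z. u \<bullet> (F z *v u) \<partial>P" "\<integral>z. (norm (F z *v u))\<^sup>2 \<partial>P"])
      (use int_inner int_sq in \<open>auto simp: expand prob_space\<close>)
qed

definition second_moment :: "'w measure \<Rightarrow> ('w \<Rightarrow> 'a::real_normed_vector) \<Rightarrow> ennreal" where
  "second_moment M X = (\<integral>\<^sup>+\<omega>. ennreal ((norm (X \<omega>))\<^sup>2) \<partial>M)"

lemma second_moment_affine_matrix_le: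
  fixes F :: "'z \<Rightarrow> real^'n^'n"
  assumes P: "prob_space P" and F: "F \<in> borel_measurable P"
    and F_bound: "\<And>z. z \<in> space P \<Longrightarrow> norm (F z) \<le> B"
    and contraction: "\<And>x. 0 < x \<Longrightarrow> x < e0 \<Longrightarrow>
      sqrt (\<integral>z. (norm ((mat 1 - x *\<^sub>R F z) *v u))\<^sup>2 \<partial>P) \<le> (1 - x * a) * norm u"
    and e: "0 < e" "e \<le> e0"
  shows "second_moment P (\<lambda>z. (mat 1 - e *\<^sub>R F z) *v u) \<le> ennreal ((1 - e * a)\<^sup>2 * (norm u)\<^sup>2)"
proof -
  obtain \<alpha> \<beta> where int: "\<And>x. integrable P (\<lambda>z. (norm ((mat 1 - x *\<^sub>R F z) *v u))\<^sup>2)"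
    and quadratic: "\<And>x. (\<integral>z. (norm ((mat 1 - x *\<^sub>R F z) *v u))\<^sup>2 \<partial>P) = (norm u)\<^sup>2 - 2 * x * \<alpha> + x\<^sup>2 * \<beta>"
    using integral_norm_affine_matrix_quadratic[OF P F F_bound] by metis
  define q where "q x = (norm u)\<^sup>2 - 2 * x * \<alpha> + x\<^sup>2 * \<beta> - ((1 - x * a) * norm u)\<^sup>2" for x
  have "{0<..<e0} \<subseteq> {x. q x \<le> 0}"
  proof
    fix x assume "x \<in> {0<..<e0}"
    then have "(\<integral>z. (norm ((mat 1 - x *\<^sub>R F z) *v u))\<^sup>2 \<partial>P) \<le> ((1 - x * a) * norm u)\<^sup>2"
      by (intro sqrt_le_D contraction) auto
    then show "x \<in> {x. q x \<le> 0}"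
      by (simp add: q_def quadratic)
  qed
  moreover have "closed {x. q x \<le> 0}"
    unfolding q_def by (intro closed_Collect_le continuous_intros)
  ultimately have "closure {0<..<e0} \<subseteq> {x. q x \<le> 0}"
    by (rule closure_minimal)
  with e have "q e \<le> 0"
    by (auto simp: subset_eq)
  then show ?thesis
    unfolding second_moment_def using int[of e]
    by (subst nn_integral_eq_integral) (auto simp: quadratic q_def power_mult_distrib intro!: ennreal_leI)
qed

lemma sqrt_integral_norm_sq_le:
  assumes X: "X \<in> borel_measurable M" and bound: "second_moment M X \<le> ennreal (c\<^sup>2)" and c: "0 \<le> c"
  shows "sqrt (\<integral>\<omega>. (norm (X \<omega>))\<^sup>2 \<partial>M) \<le> c"
proof -
  have "(\<integral>\<omega>. (norm (X \<omega>))\<^sup>2 \<partial>M) = enn2real (second_moment M X)"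
    unfolding second_moment_def using X by (intro integral_eq_nn_integral) auto
  also have "\<dots> \<le> c\<^sup>2"
    using bound by (intro enn2real_leI) auto
  finally show ?thesis
    using c real_sqrt_le_mono by fastforce
qed

lemma second_moment_average_le:
  fixes Y :: "nat \<Rightarrow> 'w \<Rightarrow> 'a::real_normed_vector"
  assumes N: "N \<ge> 1"
    and Y_meas: "\<And>c. c < N \<Longrightarrow> Y c \<in> borel_measurable M"
    and Y_bound: "\<And>c. c < N \<Longrightarrow> second_moment M (Y c) \<le> B"
  shows "second_moment M (\<lambda>\<omega>. (1 / real N) *\<^sub>R (\<Sum>c<N. Y c \<omega>)) \<le> B"
proof -
  have "second_moment M (\<lambda>\<omega>. (1 / real N) *\<^sub>R (\<Sum>c<N. Y c \<omega>))
      \<le> (\<integral>\<^sup>+\<omega>. (\<Sum>c<N. ennreal (1 / real N) * ennreal ((norm (Y c \<omega>))\<^sup>2)) \<partial>M)"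
    unfolding second_moment_def
    by (intro nn_integral_mono order_trans[OF ennreal_leI[OF norm_average_squared_le]])
      (simp add: sum_divide_distrib sum_ennreal ennreal_mult[symmetric])
  also have "\<dots> = (\<Sum>c<N. ennreal (1 / real N) * second_moment M (Y c))"
    unfolding second_moment_def using Y_meas
    by (subst nn_integral_sum) (auto intro!: sum.cong nn_integral_cmult)
  also have "\<dots> \<le> (\<Sum>c<N. ennreal (1 / real N) * B)"
    using Y_bound by (intro sum_mono mult_left_mono) auto
  also have "\<dots> = B"
    using N by (simp add: ennreal_of_nat_eq_real_of_nat mult.assoc[symmetric] flip: ennreal_mult)
  finally show ?thesis .
qed

lemma (in prob_space) nn_integral_indep_var_le:
  assumes indep: "indep_var MX X MY Y"
    and f: "case_prod f \<in> borel_measurable (MX \<Otimes>\<^sub>M MY)" and q: "q \<in> borel_measurable MX"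
    and bound: "\<And>x. x \<in> space MX \<Longrightarrow> (\<integral>\<^sup>+y. f x y \<partial>distr M MY Y) \<le> q x"
  shows "(\<integral>\<^sup>+\<omega>. f (X \<omega>) (Y \<omega>) \<partial>M) \<le> (\<integral>\<^sup>+\<omega>. q (X \<omega>) \<partial>M)"
proof -
  have X: "random_variable MX X" and Y: "random_variable MY Y"
    and joint: "distr M (MX \<Otimes>\<^sub>M MY) (\<lambda>\<omega>. (X \<omega>, Y \<omega>)) = distr M MX X \<Otimes>\<^sub>M distr M MY Y"
    using indep unfolding indep_var_distribution_eq by auto
  interpret PX: prob_space "distr M MX X" using X by (rule prob_space_distr)
  interpret PY: prob_space "distr M MY Y" using Y by (rule prob_space_distr)
  interpret pair_sigma_finite "distr M MX X" "distr M MY Y" by unfold_locales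
  have f': "case_prod f \<in> borel_measurable (distr M MX X \<Otimes>\<^sub>M distr M MY Y)"
    using f by (simp cong: measurable_cong_sets[OF sets_pair_measure_cong[OF sets_distr sets_distr] refl])
  have "(\<integral>\<^sup>+\<omega>. f (X \<omega>) (Y \<omega>) \<partial>M) = (\<integral>\<^sup>+p. case_prod f p \<partial>distr M (MX \<Otimes>\<^sub>M MY) (\<lambda>\<omega>. (X \<omega>, Y \<omega>)))"
    using f X Y by (subst nn_integral_distr) auto
  also have "\<dots> = (\<integral>\<^sup>+x. \<integral>\<^sup>+y. f x y \<partial>distr M MY Y \<partial>distr M MX X)"
    unfolding joint using PY.nn_integral_fst[OF f'] by simp
  also have "\<dots> \<le> (\<integral>\<^sup>+x. q x \<partial>distr M MX X)"
    using bound by (intro nn_integral_mono) simp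
  also have "\<dots> = (\<integral>\<^sup>+\<omega>. q (X \<omega>) \<partial>M)"
    using q X by (subst nn_integral_distr) auto
  finally show ?thesis .
qed

locale independent_samples = prob_space M for M :: "'w measure" +
  fixes Q :: "'i \<Rightarrow> 'z measure" and Z :: "'i \<Rightarrow> 'w \<Rightarrow> 'z" and I :: "'i set"
  assumes indep_samples: "indep_vars Q Z I"
    and distr_samples: "\<And>i. i \<in> I \<Longrightarrow> distr M (Q i) (Z i) = Q i"
begin

abbreviation sample_vector :: "'i set \<Rightarrow> 'w \<Rightarrow> 'i \<Rightarrow> 'z" where
  "sample_vector K \<omega> \<equiv> restrict (\<lambda>i. Z i \<omega>) K"

definition samples_measurable :: "'i set \<Rightarrow> ('w \<Rightarrow> 'b::topological_space) \<Rightarrow> bool" where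
  "samples_measurable K X \<longleftrightarrow>
     (\<exists>g \<in> borel_measurable (PiM K Q). \<forall>\<omega>\<in>space M. X \<omega> = g (sample_vector K \<omega>))"

lemma measurable_sample_vector: "K \<subseteq> I \<Longrightarrow> sample_vector K \<in> M \<rightarrow>\<^sub>M PiM K Q"
  using indep_samples unfolding indep_vars_def by (intro measurable_restrict) auto

lemma samples_measurable_imp_measurable:
  assumes "samples_measurable K X" "K \<subseteq> I"
  shows "X \<in> borel_measurable M"
proof -
  obtain g where g: "g \<in> borel_measurable (PiM K Q)" and X: "\<And>\<omega>. \<omega> \<in> space M \<Longrightarrow> X \<omega> = g (sample_vector K \<omega>)"
    using assms(1) unfolding samples_measurable_def by blast
  show ?thesis
    using measurable_compose[OF measurable_sample_vector[OF assms(2)] g] X by (subst measurable_cong) auto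
qed

lemma samples_measurable_const: "samples_measurable K (\<lambda>_. v)"
  unfolding samples_measurable_def by (intro bexI[of _ "\<lambda>_. v"]) auto

lemma samples_measurable_mono:
  assumes "samples_measurable K X" "K \<subseteq> L"
  shows "samples_measurable L X"
proof -
  obtain g where g: "g \<in> borel_measurable (PiM K Q)" and X: "\<And>\<omega>. \<omega> \<in> space M \<Longrightarrow> X \<omega> = g (sample_vector K \<omega>)"
    using assms(1) unfolding samples_measurable_def by blast
  have "(\<lambda>f. g (restrict f K)) \<in> borel_measurable (PiM L Q)"
    using measurable_compose[OF measurable_restrict_subset[OF assms(2)] g] .
  then show ?thesis
    unfolding samples_measurable_def using X assms(2) by (intro bexI) (auto simp: Int_absorb1)
qed

lemma samples_measurable_scaleR_sum:
  fixes Y :: "'c \<Rightarrow> 'w \<Rightarrow> 'b::{real_normed_vector, second_countable_topology}"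
  assumes "finite C" "\<And>c. c \<in> C \<Longrightarrow> samples_measurable K (Y c)"
  shows "samples_measurable K (\<lambda>\<omega>. r *\<^sub>R (\<Sum>c\<in>C. Y c \<omega>))"
proof -
  obtain g where g: "\<And>c. c \<in> C \<Longrightarrow> g c \<in> borel_measurable (PiM K Q)"
    and Y: "\<And>c \<omega>. c \<in> C \<Longrightarrow> \<omega> \<in> space M \<Longrightarrow> Y c \<omega> = g c (sample_vector K \<omega>)"
    using assms(2) unfolding samples_measurable_def by metis
  show ?thesis
    unfolding samples_measurable_def using assms(1) g Y
    by (intro bexI[of _ "\<lambda>x. r *\<^sub>R (\<Sum>c\<in>C. g c x)"]) auto
qed

lemma samples_measurable_matrix_step:
  fixes F :: "'z \<Rightarrow> real^'n^'m" and X :: "'w \<Rightarrow> real^'n"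
  assumes "samples_measurable K X" "F \<in> borel_measurable (Q k)"
  shows "samples_measurable (insert k K) (\<lambda>\<omega>. F (Z k \<omega>) *v X \<omega>)"
proof -
  obtain g where g: "g \<in> borel_measurable (PiM K Q)" and X: "\<And>\<omega>. \<omega> \<in> space M \<Longrightarrow> X \<omega> = g (sample_vector K \<omega>)"
    using assms(1) unfolding samples_measurable_def by blast
  have "(\<lambda>x. F (x k) *v g (restrict x K)) \<in> borel_measurable (PiM (insert k K) Q)"
    using measurable_compose[OF measurable_restrict_subset g] assms(2) by measurable auto
  then show ?thesis
    unfolding samples_measurable_def using X by (intro bexI) (auto simp: Int_absorb1 subset_insertI)
qed

lemma nn_integral_distr_sample:
  assumes k: "k \<in> I" and h: "h \<in> borel_measurable (Q k)"
  shows "(\<integral>\<^sup>+y. h (y k) \<partial>distr M (PiM {k} Q) (sample_vector {k})) = (\<integral>\<^sup>+z. h z \<partial>Q k)"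
proof -
  have Z: "random_variable (Q k) (Z k)"
    using indep_samples k unfolding indep_vars_def by auto
  have "(\<integral>\<^sup>+y. h (y k) \<partial>distr M (PiM {k} Q) (sample_vector {k})) = (\<integral>\<^sup>+\<omega>. h (Z k \<omega>) \<partial>M)"
    using k h by (subst nn_integral_distr) (auto intro: measurable_sample_vector)
  also have "\<dots> = (\<integral>\<^sup>+z. h z \<partial>distr M (Q k) (Z k))"
    using Z h by (subst nn_integral_distr) auto
  finally show ?thesis
    using distr_samples[OF k] by simp
qed

lemma second_moment_matrix_step_le:
  fixes F :: "'z \<Rightarrow> real^'n^'m" and X :: "'w \<Rightarrow> real^'n"
  assumes K: "K \<subseteq> I" and k: "k \<in> I" "k \<notin> K" and X: "samples_measurable K X"
    and F: "F \<in> borel_measurable (Q k)"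
    and F_bound: "\<And>u. second_moment (Q k) (\<lambda>z. F z *v u) \<le> ennreal (r * (norm u)\<^sup>2)"
  shows "second_moment M (\<lambda>\<omega>. F (Z k \<omega>) *v X \<omega>) \<le> ennreal r * second_moment M X"
proof -
  obtain g where g: "g \<in> borel_measurable (PiM K Q)"
    and X_eq: "\<And>\<omega>. \<omega> \<in> space M \<Longrightarrow> X \<omega> = g (sample_vector K \<omega>)"
    using X unfolding samples_measurable_def by blast
  have "second_moment M (\<lambda>\<omega>. F (Z k \<omega>) *v X \<omega>)
      = (\<integral>\<^sup>+\<omega>. ennreal ((norm (F (sample_vector {k} \<omega> k) *v g (sample_vector K \<omega>)))\<^sup>2) \<partial>M)"
    unfolding second_moment_def using X_eq by (intro nn_integral_cong) simp
  also have "\<dots> \<le> (\<integral>\<^sup>+\<omega>. ennreal r * ennreal ((norm (g (sample_vector K \<omega>)))\<^sup>2) \<partial>M)"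
  proof (rule nn_integral_indep_var_le[where X = "sample_vector K" and Y = "sample_vector {k}"
        and f = "\<lambda>x y. ennreal ((norm (F (y k) *v g x))\<^sup>2)"])
    show "indep_var (PiM K Q) (sample_vector K) (PiM {k} Q) (sample_vector {k})"
      using K k by (intro indep_var_restrict[OF indep_samples]) auto
    show "(\<lambda>(x, y). ennreal ((norm (F (y k) *v g x))\<^sup>2)) \<in> borel_measurable (PiM K Q \<Otimes>\<^sub>M PiM {k} Q)"
      using F g by measurable
    show "(\<lambda>x. ennreal r * ennreal ((norm (g x))\<^sup>2)) \<in> borel_measurable (PiM K Q)"
      using g by measurable
    show "(\<integral>\<^sup>+y. ennreal ((norm (F (y k) *v g x))\<^sup>2) \<partial>distr M (PiM {k} Q) (sample_vector {k}))
        \<le> ennreal r * ennreal ((norm (g x))\<^sup>2)" for x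
    proof -
      have "(\<integral>\<^sup>+y. ennreal ((norm (F (y k) *v g x))\<^sup>2) \<partial>distr M (PiM {k} Q) (sample_vector {k}))
          = second_moment (Q k) (\<lambda>z. F z *v g x)"
        unfolding second_moment_def using F[measurable] by (intro nn_integral_distr_sample k) measurable
      with F_bound[of "g x"] show ?thesis
        by (simp add: ennreal_mult'')
    qed
  qed
  also have "\<dots> = ennreal r * second_moment M X"
    unfolding second_moment_def using samples_measurable_imp_measurable[OF X K] X_eq
    by (subst nn_integral_cmult[symmetric]) (auto intro!: nn_integral_cong)
  finally show ?thesis .
qed

lemma samples_measurable_lprod:
  fixes F :: "nat \<Rightarrow> 'z \<Rightarrow> real^'n^'n" and X :: "'w \<Rightarrow> real^'n"
  assumes X: "samples_measurable K X" and F: "\<And>j. j \<in> {1..h} \<Longrightarrow> F j \<in> borel_measurable (Q (k j))"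
  shows "samples_measurable (K \<union> k ` {1..h}) (\<lambda>\<omega>. lprod (\<lambda>j. F j (Z (k j) \<omega>)) h *v X \<omega>)"
  using F
proof (induction h)
  case 0
  then show ?case using X by simp
next
  case (Suc h)
  have "K \<union> k ` {1..Suc h} = insert (k (Suc h)) (K \<union> k ` {1..h})"
    by (auto simp: atLeastAtMostSuc_conv)
  with Suc show ?case
    by (auto simp: matrix_vector_mul_assoc[symmetric] intro!: samples_measurable_matrix_step)
qed

lemma second_moment_lprod_le:
  fixes F :: "nat \<Rightarrow> 'z \<Rightarrow> real^'n^'n" and X :: "'w \<Rightarrow> real^'n"
  assumes K: "K \<subseteq> I" and k: "inj_on k {1..h}" "k ` {1..h} \<subseteq> I - K" and X: "samples_measurable K X"
    and F: "\<And>j. j \<in> {1..h} \<Longrightarrow> F j \<in> borel_measurable (Q (k j))"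
    and F_bound: "\<And>j u. j \<in> {1..h} \<Longrightarrow> second_moment (Q (k j)) (\<lambda>z. F j z *v u) \<le> ennreal (r * (norm u)\<^sup>2)"
  shows "second_moment M (\<lambda>\<omega>. lprod (\<lambda>j. F j (Z (k j) \<omega>)) h *v X \<omega>) \<le> ennreal r ^ h * second_moment M X"
  using k F F_bound
proof (induction h)
  case 0
  then show ?case by simp
next
  case (Suc h)
  let ?K = "K \<union> k ` {1..h}"
  have fresh: "k (Suc h) \<in> I" "k (Suc h) \<notin> ?K"
    using Suc.prems(1,2) by (force simp: inj_on_def image_subset_iff)+
  have "second_moment M (\<lambda>\<omega>. lprod (\<lambda>j. F j (Z (k j) \<omega>)) (Suc h) *v X \<omega>)
      \<le> ennreal r * second_moment M (\<lambda>\<omega>. lprod (\<lambda>j. F j (Z (k j) \<omega>)) h *v X \<omega>)"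
    unfolding lprod.simps matrix_vector_mul_assoc[symmetric]
    using K Suc.prems fresh
    by (intro second_moment_matrix_step_le[where K = ?K] samples_measurable_lprod[OF X])
      (auto simp: image_subset_iff)
  also have "\<dots> \<le> ennreal r * (ennreal r ^ h * second_moment M X)"
    using Suc by (intro mult_left_mono) (auto simp: inj_on_subset image_subset_iff)
  finally show ?case
    by (simp add: mult.assoc)
qed

end

(* The sample spaces and samples are
   written with fst/snd rather than a tuple pattern, which the simplifier would rewrite inside
   the locale constants. *)
locale federated_lsa =
  independent_samples M "\<lambda>i. \<pi> (fst i)" "\<lambda>i. Zs (fst i) (fst (snd i)) (snd (snd i))"
    "{(c, s, h). c < N \<and> 1 \<le> s \<and> 1 \<le> h \<and> h \<le> H s}"
  for M :: "'w measure" and \<pi> :: "nat \<Rightarrow> 'z measure" and Zs :: "nat \<Rightarrow> nat \<Rightarrow> nat \<Rightarrow> 'w \<Rightarrow> 'z"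
    and N :: nat and H :: "nat \<Rightarrow> nat" +
  fixes A :: "nat \<Rightarrow> 'z \<Rightarrow> real^'d^'d" and \<eta> \<rho> :: "nat \<Rightarrow> real"
  assumes N_pos: "1 \<le> N"
    and A_meas: "\<And>c. c < N \<Longrightarrow> A c \<in> borel_measurable (\<pi> c)"
    and local_step_second_moment: "\<And>c s u. c < N \<Longrightarrow> 1 \<le> s \<Longrightarrow>
      second_moment (\<pi> c) (\<lambda>z. (mat 1 - \<eta> s *\<^sub>R A c z) *v u) \<le> ennreal ((\<rho> s)\<^sup>2 * (norm u)\<^sup>2)"
begin

abbreviation first_rounds :: "nat \<Rightarrow> (nat \<times> nat \<times> nat) set" where
  "first_rounds t \<equiv> {(c, s, h). c < N \<and> 1 \<le> s \<and> s \<le> t \<and> 1 \<le> h \<and> h \<le> H s}"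

abbreviation local_product :: "nat \<Rightarrow> nat \<Rightarrow> 'w \<Rightarrow> real^'d^'d" where
  "local_product c s \<omega> \<equiv> Gamma_loc A \<eta> H (\<lambda>c s h. Zs c s h \<omega>) c s"

(* transient t v is the paper's transient term with theta_0 - theta_star replaced by v. *)
definition transient :: "nat \<Rightarrow> real^'d \<Rightarrow> 'w \<Rightarrow> real^'d" where
  "transient t v \<omega> = lprod (\<lambda>s. Gamma_avg N A \<eta> H (\<lambda>c s h. Zs c s h \<omega>) s) t *v v"

lemma transient_Suc:
  "transient (Suc t) v \<omega> = (1 / real N) *\<^sub>R (\<Sum>c<N. local_product c (Suc t) \<omega> *v transient t v \<omega>)"
  by (simp add: transient_def Gamma_avg_def matrix_vector_mul_assoc[symmetric]
      scaleR_matrix_vector_assoc[symmetric] sum_matrix_vector_mult)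

lemma samples_measurable_local_product:
  assumes c: "c < N" and X: "samples_measurable (first_rounds t) X"
  shows "samples_measurable (first_rounds (Suc t)) (\<lambda>\<omega>. local_product c (Suc t) \<omega> *v X \<omega>)"
proof -
  have "samples_measurable (first_rounds t \<union> (\<lambda>j. (c, Suc t, j)) ` {1..H (Suc t)})
      (\<lambda>\<omega>. lprod (\<lambda>j. mat 1 - \<eta> (Suc t) *\<^sub>R A c (Zs c (Suc t) j \<omega>)) (H (Suc t)) *v X \<omega>)"
    using samples_measurable_lprod[OF X, where F = "\<lambda>j z. mat 1 - \<eta> (Suc t) *\<^sub>R A c z"
        and h = "H (Suc t)" and k = "\<lambda>j. (c, Suc t, j)"] A_meas[OF c] by simp
  then show ?thesis
    unfolding Gamma_loc_def by (rule samples_measurable_mono) (auto simp: c)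
qed

lemma second_moment_local_product_le:
  assumes c: "c < N" and X: "samples_measurable (first_rounds t) X"
  shows "second_moment M (\<lambda>\<omega>. local_product c (Suc t) \<omega> *v X \<omega>)
    \<le> ennreal ((\<rho> (Suc t))\<^sup>2) ^ H (Suc t) * second_moment M X"
  unfolding Gamma_loc_def
proof (rule second_moment_lprod_le[where k = "\<lambda>j. (c, Suc t, j)" and F = "\<lambda>j z. mat 1 - \<eta> (Suc t) *\<^sub>R A c z",
      simplified fst_conv snd_conv, OF _ _ _ X])
  show "(\<lambda>j. (c, Suc t, j)) ` {1..H (Suc t)}
      \<subseteq> {(c, s, h). c < N \<and> 1 \<le> s \<and> 1 \<le> h \<and> h \<le> H s} - first_rounds t"
    using c by auto
  show "second_moment (\<pi> c) (\<lambda>z. (mat 1 - \<eta> (Suc t) *\<^sub>R A c z) *v u) \<le> ennreal ((\<rho> (Suc t))\<^sup>2 * (norm u)\<^sup>2)" for u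
    using c by (rule local_step_second_moment) simp
  show "(\<lambda>z. mat 1 - \<eta> (Suc t) *\<^sub>R A c z) \<in> borel_measurable (\<pi> c)"
    using A_meas[OF c] by measurable
qed (auto simp: inj_on_def)

lemma samples_measurable_transient: "samples_measurable (first_rounds t) (transient t v)"
proof (induction t)
  case 0
  then show ?case
    unfolding transient_def lprod.simps matrix_vector_mul_lid by (rule samples_measurable_const)
next
  case (Suc t)
  then show ?case
    unfolding transient_Suc[abs_def]
    by (intro samples_measurable_scaleR_sum samples_measurable_local_product) auto
qed

lemma second_moment_transient_le:
  "second_moment M (transient t v) \<le> ennreal ((\<Prod>s = 1..t. \<rho> s ^ H s)\<^sup>2 * (norm v)\<^sup>2)"
proof (induction t)
  case 0
  then show ?case
    by (simp add: transient_def second_moment_def emeasure_space_1)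
next
  case (Suc t)
  have "second_moment M (\<lambda>\<omega>. local_product c (Suc t) \<omega> *v transient t v \<omega>)
      \<le> ennreal ((\<Prod>s = 1..Suc t. \<rho> s ^ H s)\<^sup>2 * (norm v)\<^sup>2)" if c: "c < N" for c
  proof -
    have "second_moment M (\<lambda>\<omega>. local_product c (Suc t) \<omega> *v transient t v \<omega>)
        \<le> ennreal ((\<rho> (Suc t))\<^sup>2) ^ H (Suc t) * second_moment M (transient t v)"
      using c samples_measurable_transient by (rule second_moment_local_product_le)
    also have "\<dots> \<le> ennreal ((\<rho> (Suc t))\<^sup>2) ^ H (Suc t) * ennreal ((\<Prod>s = 1..t. \<rho> s ^ H s)\<^sup>2 * (norm v)\<^sup>2)"
      using Suc by (rule mult_left_mono) simp
    also have "\<dots> = ennreal (((\<rho> (Suc t))\<^sup>2) ^ H (Suc t) * ((\<Prod>s = 1..t. \<rho> s ^ H s)\<^sup>2 * (norm v)\<^sup>2))"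
      by (simp add: ennreal_power ennreal_mult')
    also have "\<dots> = ennreal ((\<Prod>s = 1..Suc t. \<rho> s ^ H s)\<^sup>2 * (norm v)\<^sup>2)"
      by (simp add: power2_eq_square power_mult_distrib algebra_simps)
    finally show ?thesis .
  qed
  moreover have "(\<lambda>\<omega>. local_product c (Suc t) \<omega> *v transient t v \<omega>) \<in> borel_measurable M" if "c < N" for c
    using samples_measurable_local_product[OF that samples_measurable_transient]
    by (rule samples_measurable_imp_measurable) auto
  ultimately show ?case
    unfolding transient_Suc[abs_def] by (intro second_moment_average_le N_pos)
qed

end

theorem lemma1:
  fixes M :: "'w measure"
    and N :: nat
    and \<pi> :: "nat \<Rightarrow> 'z measure"
    and A :: "nat \<Rightarrow> 'z \<Rightarrow> real^'d^'d"
    and b :: "nat \<Rightarrow> 'z \<Rightarrow> real^'d"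
    and \<theta>star \<theta>0 :: "real^'d"
    and \<theta>c :: "nat \<Rightarrow> real^'d"
    and a \<eta>inf :: real
    and \<eta> :: "nat \<Rightarrow> real"
    and H :: "nat \<Rightarrow> nat"
    and Zs :: "nat \<Rightarrow> nat \<Rightarrow> nat \<Rightarrow> 'w \<Rightarrow> 'z"
    and t :: nat
  defines "Abar \<equiv> \<lambda>c. \<integral>z. A c z \<partial>\<pi> c"
    and "bbar \<equiv> \<lambda>c. \<integral>z. b c z \<partial>\<pi> c"
    and "\<epsilon> \<equiv> \<lambda>c z. (A c z - (\<integral>y. A c y \<partial>\<pi> c)) *v \<theta>c c - (b c z - (\<integral>y. b c y \<partial>\<pi> c))"
  assumes M: "prob_space M"
    and N: "N \<ge> 1"
    and \<pi>: "\<And>c. c < N \<Longrightarrow> prob_space (\<pi> c)"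
    and A_meas: "\<And>c. c < N \<Longrightarrow> A c \<in> borel_measurable (\<pi> c)"
    and b_meas: "\<And>c. c < N \<Longrightarrow> b c \<in> borel_measurable (\<pi> c)"
    and b_int: "\<And>c. c < N \<Longrightarrow> integrable (\<pi> c) (b c)"
    and \<theta>star: "((1 / real N) *\<^sub>R (\<Sum>c<N. Abar c)) *v \<theta>star = (1 / real N) *\<^sub>R (\<Sum>c<N. bbar c)"
    and \<theta>c: "\<And>c. c < N \<Longrightarrow> Abar c *v \<theta>c c = bbar c"
    \<comment> \<open>Assumption A1(2)\<close>
    and hurw: "\<And>c. c < N \<Longrightarrow> hurwitz (- Abar c)"
    and a_pos: "a > 0" and \<eta>inf_pos: "\<eta>inf > 0" and \<eta>inf_a: "\<eta>inf * a \<le> 1 / 2"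
    and A1: "\<And>c e u. c < N \<Longrightarrow> 0 < e \<Longrightarrow> e < \<eta>inf \<Longrightarrow>
               sqrt (\<integral>z. (norm ((mat 1 - e *\<^sub>R A c z) *v u))\<^sup>2 \<partial>\<pi> c) \<le> (1 - e * a) * norm u"
    \<comment> \<open>Assumption A2\<close>
    and Zs_meas: "\<And>c s h. c < N \<Longrightarrow> 1 \<le> s \<Longrightarrow> 1 \<le> h \<Longrightarrow> h \<le> H s \<Longrightarrow>
               Zs c s h \<in> M \<rightarrow>\<^sub>M \<pi> c"
    and Zs_distr: "\<And>c s h. c < N \<Longrightarrow> 1 \<le> s \<Longrightarrow> 1 \<le> h \<Longrightarrow> h \<le> H s \<Longrightarrow>
               distr M (\<pi> c) (Zs c s h) = \<pi> c"
    and Zs_indep: "prob_space.indep_vars M (\<lambda>(c, s, h). \<pi> c) (\<lambda>(c, s, h). Zs c s h)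
               {(c, s, h). c < N \<and> 1 \<le> s \<and> 1 \<le> h \<and> h \<le> H s}"
    and eps_bdd: "\<exists>B. \<forall>c<N. \<forall>z\<in>space (\<pi> c). norm (\<epsilon> c z) \<le> B"
    and A_bdd: "\<exists>B. \<forall>c<N. \<forall>z\<in>space (\<pi> c). max (norm (A c z)) (norm (A c z - Abar c)) \<le> B"
    \<comment> \<open>step sizes\<close>
    and \<eta>: "\<And>s. 1 \<le> s \<Longrightarrow> 0 < \<eta> s \<and> \<eta> s \<le> \<eta>inf"
    and t: "t \<ge> 1"
  shows "sqrt (\<integral>\<omega>. (norm (lprod (\<lambda>s. Gamma_avg N A \<eta> H (\<lambda>c s h. Zs c s h \<omega>) s) t
                              *v (\<theta>0 - \<theta>star)))\<^sup>2 \<partial>M)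
         \<le> (\<Prod>s = 1..t. (1 - \<eta> s * a) ^ H s) * norm (\<theta>0 - \<theta>star)"
proof -
  obtain B where B: "\<And>c z. c < N \<Longrightarrow> z \<in> space (\<pi> c) \<Longrightarrow> norm (A c z) \<le> B"
    using A_bdd by (meson max.bounded_iff)
  interpret federated_lsa M \<pi> Zs N H A \<eta> "\<lambda>s. 1 - \<eta> s * a"
  proof (intro federated_lsa.intro independent_samples.intro M independent_samples_axioms.intro
      federated_lsa_axioms.intro)
    show "prob_space.indep_vars M (\<lambda>i. \<pi> (fst i)) (\<lambda>i. Zs (fst i) (fst (snd i)) (snd (snd i)))
        {(c, s, h). c < N \<and> 1 \<le> s \<and> 1 \<le> h \<and> h \<le> H s}"
      using Zs_indep unfolding case_prod_unfold .
    show "second_moment (\<pi> c) (\<lambda>z. (mat 1 - \<eta> s *\<^sub>R A c z) *v u) \<le> ennreal ((1 - \<eta> s * a)\<^sup>2 * (norm u)\<^sup>2)"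
      if "c < N" "1 \<le> s" for c s u
      by (rule second_moment_affine_matrix_le[OF \<pi>[OF that(1)] A_meas[OF that(1)] B[OF that(1)] A1[OF that(1)]])
        (use \<eta>[OF that(2)] in auto)
  qed (use N A_meas Zs_distr in auto)
  have "0 \<le> 1 - \<eta> s * a" if "1 \<le> s" for s
    using \<eta>[OF that] a_pos \<eta>inf_a mult_right_mono[of "\<eta> s" \<eta>inf a] by linarith
  then have "0 \<le> (\<Prod>s = 1..t. (1 - \<eta> s * a) ^ H s) * norm (\<theta>0 - \<theta>star)"
    by (intro mult_nonneg_nonneg prod_nonneg zero_le_power) auto
  then have "sqrt (\<integral>\<omega>. (norm (transient t (\<theta>0 - \<theta>star) \<omega>))\<^sup>2 \<partial>M)
      \<le> (\<Prod>s = 1..t. (1 - \<eta> s * a) ^ H s) * norm (\<theta>0 - \<theta>star)"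
    using samples_measurable_imp_measurable[OF samples_measurable_transient] second_moment_transient_le
    by (intro sqrt_integral_norm_sq_le) (auto simp: power_mult_distrib)
  then show ?thesis
    by (simp add: transient_def)
qed

end
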